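(* Let $c$ and $z$ be complex numbers and let $n$ be a positive integer. Then \[ \sum_{\pi \in \mathcal{D}(n)} (-1)^{\#(\pi)-1} \sum_{j=1}^{s(\pi)} \bigl(\ell(\pi) - s(\pi) + j\bigr)^z\, c^{\ell(\pi) - s(\pi) + j} = \sigma_{z,c}(n), \] where $\sigma_{z,c}(n) = \sum_{d \mid n} d^z c^d$.
   Context: For a positive integer $n$, $\mathcal{D}(n)$ denotes the set of all partitions of $n$ into distinct parts. For a partition $\pi$: $s(\pi)$ is its smallest part, $\ell(\pi)$ its largest part, and $\#(\pi)$ its number of parts. For a positive integer $m$ and complex $z$, $m^z = e^{z\log m}$ with the real logarithm. The sum $\sum_{d\mid n}$ runs over the positive divisors $d$ of $n$. *)

theory Defs
  imports "HOL-Analysis.Analysis"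
begin

text \<open>A partition of n into distinct parts is represented by its (finite) set of parts,
  all positive, summing to n.\<close>
definition distinct_partitions :: "nat \<Rightarrow> nat set set" where
  "distinct_partitions n = {P. finite P \<and> (\<forall>p\<in>P. p > 0) \<and> \<Sum>P = n}"

definition sigma_zc :: "complex \<Rightarrow> complex \<Rightarrow> nat \<Rightarrow> complex" where
  "sigma_zc z c n = (\<Sum>d\<in>{d::nat. d dvd n}. (of_nat d :: complex) powr z * c ^ d)"

end

theory Submission
  imports Defs
begin

text \<open>Writing \<open>f d = d powr z * c ^ d\<close>, the inner sum runs over \<open>f d\<close> for
  \<open>Max P - Min P < d \<le> Max P\<close>, so after exchanging the sums the coefficient of \<open>f d\<close> is the
  signed count \<open>window_coeff d n\<close> of the partitions whose window \<open>(Max P - Min P, Max P]\<close>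
  contains \<open>d\<close>. Lowering the largest part by \<open>d\<close> (it becomes the new smallest part) or, if it
  equals \<open>d\<close>, deleting it, yields \<open>window_coeff d n = window_coeff d (n - d) + [n = d]\<close>,
  whence \<open>window_coeff d n = [d dvd n]\<close>.\<close>

lemma distinct_partitions_iff:
  "P \<in> distinct_partitions n \<longleftrightarrow> finite P \<and> (\<forall>p\<in>P. p > 0) \<and> \<Sum>P = n"
  by (simp add: distinct_partitions_def)

lemma part_le_of_distinct_partition:
  assumes "P \<in> distinct_partitions n" "p \<in> P"
  shows "p \<le> n"
proof -
  have "finite P" "\<Sum>P = n" using assms by (auto simp: distinct_partitions_iff)
  then show ?thesis using assms(2) by (metis member_le_sum zero_le)
qed

lemma finite_distinct_partitions: "finite (distinct_partitions n)"
proof (rule finite_subset)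
  show "distinct_partitions n \<subseteq> Pow {1..n}"
    using part_le_of_distinct_partition by (auto simp: distinct_partitions_iff Suc_le_eq)
qed simp

lemma distinct_partition_nonempty: "P \<in> distinct_partitions n \<Longrightarrow> 0 < n \<Longrightarrow> P \<noteq> {}"
  by (auto simp: distinct_partitions_iff)

lemma sum_insert_Diff_singleton:
  fixes P :: "'a::comm_monoid_add set"
  assumes "finite P" "a \<in> P" "b \<notin> P - {a}"
  shows "\<Sum>(insert b (P - {a})) + a = \<Sum>P + b"
  using assms sum.remove[of P a "\<lambda>x. x"] by (simp add: ac_simps)

lemma card_insert_Diff_singleton:
  assumes "finite P" "a \<in> P" "b \<notin> P - {a}"
  shows "card (insert b (P - {a})) = card P"
  using assms card.remove[of P a] by simp

definition signed_count :: "nat set set \<Rightarrow> int" where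
  "signed_count A = (\<Sum>P\<in>A. (-1) ^ (card P - 1))"

lemma signed_count_split:
  assumes "finite A"
  shows "signed_count A = signed_count {x\<in>A. Q x} + signed_count {x\<in>A. \<not> Q x}"
proof -
  have "A = {x\<in>A. Q x} \<union> {x\<in>A. \<not> Q x}" by blast
  then show ?thesis
    unfolding signed_count_def using assms by (metis (no_types, lifting) sum.union_disjoint
        finite_Un disjoint_iff mem_Collect_eq)
qed

definition window_partitions :: "nat \<Rightarrow> nat \<Rightarrow> nat set set" where
  "window_partitions m n = {P\<in>distinct_partitions n. P \<noteq> {} \<and> Max P - Min P < m}"

definition small_partitions :: "nat \<Rightarrow> nat \<Rightarrow> nat set set" where
  "small_partitions m n = {P\<in>distinct_partitions n. P \<subseteq> {1..<m}}"

definition window_coeff :: "nat \<Rightarrow> nat \<Rightarrow> int" where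
  "window_coeff m n = signed_count {P\<in>window_partitions m n. m \<le> Max P}"

lemma finite_window_partitions: "finite (window_partitions m n)"
  unfolding window_partitions_def using finite_distinct_partitions by simp

lemma window_coeff_eq_0_if_less:
  assumes "n < m"
  shows "window_coeff m n = 0"
proof -
  have "Max P \<le> n" if "P \<in> window_partitions m n" for P
    using that part_le_of_distinct_partition[of P n "Max P"]
    by (auto simp: window_partitions_def distinct_partitions_iff)
  then have empty: "{P\<in>window_partitions m n. m \<le> Max P} = {}" using assms by fastforce
  show ?thesis unfolding window_coeff_def signed_count_def empty by simp
qed

lemma signed_count_window_partitions:
  "signed_count (window_partitions m k) = window_coeff m k + signed_count (small_partitions m k - {{}})"
proof -
  have "{P\<in>window_partitions m k. \<not> m \<le> Max P} = small_partitions m k - {{}}"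
  proof (intro set_eqI iffI)
    fix P assume P: "P \<in> {P\<in>window_partitions m k. \<not> m \<le> Max P}"
    then have "finite P" "\<forall>p\<in>P. p > 0" "P \<noteq> {}"
      by (auto simp: window_partitions_def distinct_partitions_iff)
    then have "P \<subseteq> {1..<m}" using P by (auto simp: Suc_le_eq) (meson Max_ge le_less_trans not_le)
    with P show "P \<in> small_partitions m k - {{}}"
      by (auto simp: window_partitions_def small_partitions_def)
  next
    fix P assume P: "P \<in> small_partitions m k - {{}}"
    then have "finite P" "P \<noteq> {}" by (auto simp: small_partitions_def distinct_partitions_iff)
    then have "Max P < m" using P Max_in by (fastforce simp: small_partitions_def)
    with P show "P \<in> {P\<in>window_partitions m k. \<not> m \<le> Max P}"
      by (auto simp: window_partitions_def small_partitions_def)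
  qed
  then show ?thesis
    using signed_count_split[OF finite_window_partitions, of m k "\<lambda>P. m \<le> Max P"]
    by (simp add: window_coeff_def)
qed

text \<open>The empty partition contributes \<open>1\<close> to both sums, every other one cancels.\<close>
lemma signed_count_small_partitions:
  "signed_count (small_partitions m k - {{}}) + (\<Sum>Q\<in>small_partitions m k. (-1) ^ card Q)
     = (if k = 0 then 1 else 0)"
proof -
  let ?S = "small_partitions m k"
  let ?N = "?S - {{}}"
  have fin: "finite ?S" unfolding small_partitions_def using finite_distinct_partitions by simp
  have "{} \<in> ?S \<longleftrightarrow> k = 0" by (auto simp: small_partitions_def distinct_partitions_iff)
  then have total: "(\<Sum>Q\<in>?S. (-1::int) ^ card Q) = (\<Sum>Q\<in>?N. (-1) ^ card Q) + (if k = 0 then 1 else 0)"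
    using fin sum.remove[OF fin, of "{}" "\<lambda>Q. (-1::int) ^ card Q"] by auto
  have "(-1::int) ^ (card Q - 1) = - ((-1) ^ card Q)" if "Q \<in> ?N" for Q
  proof -
    have "card Q > 0" using that by (auto simp: small_partitions_def distinct_partitions_iff card_gt_0_iff)
    then show ?thesis by (cases "card Q") auto
  qed
  then have "signed_count ?N = - (\<Sum>Q\<in>?N. (-1) ^ card Q)"
    unfolding signed_count_def by (simp add: sum_negf)
  with total show ?thesis by simp
qed

definition lower_max :: "nat \<Rightarrow> nat set \<Rightarrow> nat set" where
  "lower_max m P = insert (Max P - m) (P - {Max P})"

definition raise_min :: "nat \<Rightarrow> nat set \<Rightarrow> nat set" where
  "raise_min m Q = insert (Min Q + m) (Q - {Min Q})"

lemma lower_max_window_partition: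
  assumes P: "P \<in> window_partitions m n" and "m < Max P"
  shows "lower_max m P \<in> window_partitions m (n - m)"
    and "card (lower_max m P) = card P"
    and "raise_min m (lower_max m P) = P"
proof -
  have fin: "finite P" and ne: "P \<noteq> {}" and sum: "\<Sum>P = n" and window: "Max P - Min P < m"
    using P by (auto simp: window_partitions_def distinct_partitions_iff)
  define l where "l = Max P"
  have l: "l \<in> P" "\<forall>x\<in>P. x \<le> l" "m < l" using fin ne \<open>m < Max P\<close> by (simp_all add: l_def)
  have "Min P \<le> l" using fin ne by (simp add: l_def)
  then have "l - m < Min P" using window l(3) l_def by linarith
  then have above: "\<forall>x\<in>P. l - m < x" using fin by (meson Min_le less_le_trans)
  let ?Q = "insert (l - m) (P - {l})"
  have new: "l - m \<notin> P - {l}" using above by auto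
  have min: "Min ?Q = l - m" using fin above by (intro Min_eqI) auto
  have "0 < m" using window by linarith
  then have "\<forall>x\<in>?Q. x < l" using l by auto
  then have "Max ?Q < l" using fin by simp
  then have "Max ?Q - (l - m) < m" using \<open>0 < m\<close> l(3) by (simp add: less_diff_conv2)
  then have "Max ?Q - Min ?Q < m" unfolding min .
  moreover have "\<Sum>?Q = n - m"
    using sum_insert_Diff_singleton[OF fin l(1) new] sum l(3) by simp
  moreover have "\<forall>p\<in>?Q. p > 0" using assms l_def P by (auto simp: window_partitions_def distinct_partitions_iff)
  ultimately show "lower_max m P \<in> window_partitions m (n - m)"
    using fin by (simp add: lower_max_def window_partitions_def distinct_partitions_iff l_def)
  show "card (lower_max m P) = card P"
    using card_insert_Diff_singleton[OF fin l(1) new] by (simp add: lower_max_def l_def)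
  have "?Q - {l - m} = P - {l}" using new by auto
  then show "raise_min m (lower_max m P) = P"
    using min l(1) \<open>m < Max P\<close> by (simp add: raise_min_def lower_max_def l_def insert_absorb)
qed

lemma raise_min_window_partition:
  assumes Q: "Q \<in> window_partitions m k"
  shows "raise_min m Q \<in> window_partitions m (k + m)"
    and "m < Max (raise_min m Q)"
    and "lower_max m (raise_min m Q) = Q"
proof -
  have fin: "finite Q" and ne: "Q \<noteq> {}" and pos: "\<forall>p\<in>Q. p > 0" and sum: "\<Sum>Q = k"
    and window: "Max Q - Min Q < m"
    using Q by (auto simp: window_partitions_def distinct_partitions_iff)
  define s where "s = Min Q"
  have s: "s \<in> Q" "\<forall>x\<in>Q. s \<le> x" "0 < s" using fin ne pos by (simp_all add: s_def)
  have "Min Q \<le> Max Q" using fin ne by simp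
  then have "Max Q < s + m" using window s_def by linarith
  then have below: "\<forall>x\<in>Q. x < s + m" using fin by (meson Max_ge le_less_trans)
  let ?P = "insert (s + m) (Q - {s})"
  have new: "s + m \<notin> Q - {s}" using below by auto
  have max: "Max ?P = s + m" using fin below by (intro Max_eqI) auto
  have "0 < m" using window by linarith
  then have "\<forall>x\<in>?P. s < x" using s by fastforce
  then have "s < Min ?P" using fin by simp
  then have "Max ?P - Min ?P < m" using max \<open>0 < m\<close> by linarith
  moreover have "\<Sum>?P = k + m"
    using sum_insert_Diff_singleton[OF fin s(1) new] sum by simp
  moreover have "\<forall>p\<in>?P. p > 0" using pos s(3) by auto
  ultimately show "raise_min m Q \<in> window_partitions m (k + m)"
    using fin by (simp add: raise_min_def window_partitions_def distinct_partitions_iff s_def)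
  show "m < Max (raise_min m Q)" using max s(3) by (simp add: raise_min_def s_def)
  have "?P - {s + m} = Q - {s}" using new by auto
  then show "lower_max m (raise_min m Q) = Q"
    using max s(1) by (simp add: raise_min_def lower_max_def s_def insert_absorb)
qed

lemma signed_count_window_max_greater:
  assumes "m \<le> n"
  shows "signed_count {P\<in>window_partitions m n. m < Max P} = signed_count (window_partitions m (n - m))"
  unfolding signed_count_def
proof (rule sum.reindex_bij_witness[where i = "raise_min m" and j = "lower_max m"])
  fix Q assume "Q \<in> window_partitions m (n - m)"
  then show "lower_max m (raise_min m Q) = Q" "raise_min m Q \<in> {P\<in>window_partitions m n. m < Max P}"
    using raise_min_window_partition[of Q m "n - m"] assms by auto
qed (use lower_max_window_partition in auto)

lemma signed_count_window_max_eq: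
  assumes "1 \<le> m" "m \<le> n"
  shows "signed_count {P\<in>window_partitions m n. Max P = m} = (\<Sum>Q\<in>small_partitions m (n - m). (-1) ^ card Q)"
  unfolding signed_count_def
proof (rule sum.reindex_bij_witness[where i = "insert m" and j = "\<lambda>P. P - {m}"])
  fix P assume "P \<in> {P\<in>window_partitions m n. Max P = m}"
  then have P: "P \<in> distinct_partitions n" "P \<noteq> {}" "Max P = m"
    by (auto simp: window_partitions_def)
  have fin: "finite P" and pos: "\<forall>p\<in>P. p > 0" and sum: "\<Sum>P = n"
    using P by (auto simp: distinct_partitions_iff)
  have m: "m \<in> P" using Max_in[OF fin P(2)] P by simp
  show "insert m (P - {m}) = P" using m by auto
  have "\<Sum>(P - {m}) = n - m" using sum_diff1_nat[of "\<lambda>x. x" P m] m sum by simp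
  moreover have "P - {m} \<subseteq> {1..<m}"
  proof -
    have "\<forall>x\<in>P. x \<le> m" using fin P(3) by (metis Max_ge)
    then show ?thesis using pos by (force simp: Suc_le_eq)
  qed
  ultimately show "P - {m} \<in> small_partitions m (n - m)"
    using fin pos by (auto simp: small_partitions_def distinct_partitions_iff)
  show "(-1) ^ card (P - {m}) = (-1) ^ (card P - 1)" using fin m by simp
next
  fix Q assume "Q \<in> small_partitions m (n - m)"
  then have fin: "finite Q" and pos: "\<forall>p\<in>Q. p > 0" and sum: "\<Sum>Q = n - m" and small: "Q \<subseteq> {1..<m}"
    by (auto simp: small_partitions_def distinct_partitions_iff)
  then show "insert m Q - {m} = Q" by auto
  have max: "Max (insert m Q) = m" using fin small by (intro Max_eqI) auto
  have "1 \<le> Min (insert m Q)" using fin pos assms(1) by (simp add: Suc_le_eq)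
  then have "Max (insert m Q) - Min (insert m Q) < m" using max assms(1) by linarith
  moreover have "m \<notin> Q" using small by auto
  then have "\<Sum>(insert m Q) = n" using fin sum assms(2) by simp
  ultimately show "insert m Q \<in> {P\<in>window_partitions m n. Max P = m}"
    using fin pos max assms(1) by (auto simp: window_partitions_def distinct_partitions_iff)
qed

lemma window_coeff_rec:
  assumes "1 \<le> m" "m \<le> n"
  shows "window_coeff m n = window_coeff m (n - m) + (if n = m then 1 else 0)"
proof -
  let ?W = "{P\<in>window_partitions m n. m \<le> Max P}"
  have greater: "{P\<in>?W. m < Max P} = {P\<in>window_partitions m n. m < Max P}" by auto
  have equal: "{P\<in>?W. \<not> m < Max P} = {P\<in>window_partitions m n. Max P = m}" by auto
  have "window_coeff m n = signed_count {P\<in>window_partitions m n. m < Max P}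
      + signed_count {P\<in>window_partitions m n. Max P = m}"
    unfolding window_coeff_def
    using signed_count_split[of ?W "\<lambda>P. m < Max P"] finite_window_partitions
    unfolding greater equal by simp
  also have "\<dots> = signed_count (window_partitions m (n - m))
      + (\<Sum>Q\<in>small_partitions m (n - m). (-1) ^ card Q)"
    using signed_count_window_max_greater signed_count_window_max_eq assms by simp
  also have "\<dots> = window_coeff m (n - m) + (if n = m then 1 else 0)"
    using signed_count_window_partitions signed_count_small_partitions[of m "n - m"] assms by simp
  finally show ?thesis .
qed

lemma window_coeff_eq_dvd:
  assumes "1 \<le> m"
  shows "window_coeff m n = (if m dvd n \<and> 0 < n then 1 else 0)"
proof (induction n rule: less_induct)
  case (less n)
  show ?case
  proof (cases "n < m")
    case True
    then have "\<not> (m dvd n \<and> 0 < n)" by (auto dest: dvd_imp_le)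
    then show ?thesis using window_coeff_eq_0_if_less[OF True] by simp
  next
    case False
    then have rec: "window_coeff m n = window_coeff m (n - m) + (if n = m then 1 else 0)"
      using window_coeff_rec[OF assms, of n] by simp
    show ?thesis
    proof (cases "n = m")
      case True
      then show ?thesis using rec window_coeff_eq_0_if_less[of 0 m] assms by simp
    next
      case n_ne_m: False
      then have "n - m < n" "0 < n - m" using False assms by auto
      then have "window_coeff m (n - m) = (if m dvd (n - m) then 1 else 0)" using less by simp
      moreover have "m dvd (n - m) \<longleftrightarrow> m dvd n" using False by (simp add: dvd_minus_self)
      ultimately show ?thesis using rec n_ne_m False by simp
    qed
  qed
qed

lemma sum_window_eq:
  fixes f :: "nat \<Rightarrow> 'a::comm_monoid_add"
  assumes "s \<le> l" "l \<le> n"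
  shows "(\<Sum>j=1..s. f (l - s + j)) = (\<Sum>k=1..n. if l - s < k \<and> k \<le> l then f k else 0)"
proof -
  have "(\<Sum>j=1..s. f (l - s + j)) = (\<Sum>k=1 + (l - s)..s + (l - s). f k)"
    by (subst sum.shift_bounds_cl_nat_ivl) (simp add: add.commute)
  also have "{1 + (l - s)..s + (l - s)} = {k\<in>{1..n}. l - s < k \<and> k \<le> l}"
    using assms by auto
  also have "(\<Sum>k\<in>\<dots>. f k) = (\<Sum>k=1..n. if l - s < k \<and> k \<le> l then f k else 0)"
    by (rule sum.inter_filter) simp
  finally show ?thesis .
qed

lemma sum_distinct_partitions_window:
  fixes x :: "'a::comm_ring_1"
  assumes "0 < n"
  shows "(\<Sum>P\<in>distinct_partitions n. (-1) ^ (card P - 1) * (if Max P - Min P < m \<and> m \<le> Max P then x else 0))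
    = x * of_int (window_coeff m n)"
proof -
  have "(\<Sum>P\<in>distinct_partitions n. (-1) ^ (card P - 1) * (if Max P - Min P < m \<and> m \<le> Max P then x else 0))
      = (\<Sum>P\<in>{P\<in>distinct_partitions n. Max P - Min P < m \<and> m \<le> Max P}. (-1) ^ (card P - 1) * x)"
    unfolding sum.inter_filter[OF finite_distinct_partitions] by (intro sum.cong) auto
  also have "{P\<in>distinct_partitions n. Max P - Min P < m \<and> m \<le> Max P} = {P\<in>window_partitions m n. m \<le> Max P}"
    using distinct_partition_nonempty assms by (auto simp: window_partitions_def)
  also have "(\<Sum>P\<in>{P\<in>window_partitions m n. m \<le> Max P}. (-1) ^ (card P - 1) * x)
      = x * of_int (window_coeff m n)"
    unfolding window_coeff_def signed_count_def of_int_sum sum_distrib_left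
    by (intro sum.cong) simp_all
  finally show ?thesis .
qed

theorem theorem2p1:
  fixes c z :: complex and n :: nat
  assumes "n > 0"
  shows "(\<Sum>P\<in>distinct_partitions n. (-1) ^ (card P - 1) *
            (\<Sum>j=1..Min P. (of_nat (Max P - Min P + j) :: complex) powr z * c ^ (Max P - Min P + j)))
         = sigma_zc z c n"
proof -
  define f where "f k = (of_nat k :: complex) powr z * c ^ k" for k :: nat
  have "(\<Sum>j=1..Min P. f (Max P - Min P + j)) = (\<Sum>k=1..n. if Max P - Min P < k \<and> k \<le> Max P then f k else 0)"
    if "P \<in> distinct_partitions n" for P
    using that assms sum_window_eq[of "Min P" "Max P" n f]
      part_le_of_distinct_partition[OF that Max_in] distinct_partition_nonempty
    by (simp add: distinct_partitions_iff)
  then have "(\<Sum>P\<in>distinct_partitions n. (-1) ^ (card P - 1) * (\<Sum>j=1..Min P. f (Max P - Min P + j)))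
      = (\<Sum>k=1..n. \<Sum>P\<in>distinct_partitions n. (-1) ^ (card P - 1) * (if Max P - Min P < k \<and> k \<le> Max P then f k else 0))"
    by (simp add: sum_distrib_left sum.swap[where A = "distinct_partitions n"])
  also have "\<dots> = (\<Sum>k=1..n. f k * of_int (window_coeff k n))"
    using assms by (intro sum.cong[OF refl] sum_distinct_partitions_window)
  also have "\<dots> = (\<Sum>k=1..n. if k dvd n then f k else 0)"
    using assms by (intro sum.cong) (auto simp: window_coeff_eq_dvd)
  also have "\<dots> = (\<Sum>k\<in>{k\<in>{1..n}. k dvd n}. f k)"
    by (rule sum.inter_filter[symmetric]) simp
  also have "{k\<in>{1..n}. k dvd n} = {d. d dvd n}"
    using assms by (auto intro: dvd_imp_le)
  finally show ?thesis unfolding sigma_zc_def f_def .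
qed

end
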